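(* Let $n\ge2$ and let $S_1,\dots,S_n$ be isometries on an infinite-dimensional Hilbert space $H$ with $\sum_{i=1}^n S_iS_i^*=1_H$; let $O_n\subseteq B(H)$ be the C$^*$-algebra they generate. Let $\Phi_n(x)=\sum_{i=1}^n S_ixS_i^*$ and $\Psi_n(x)=\frac1n\sum_{i=1}^n S_i^*xS_i$ ($x\in O_n$); $\Psi_n$ is the adjoint of $\Phi_n$ with respect to the state $\phi_n$. Then: (i) $\Phi_n$ is not irreducible, i.e. $\Phi_n(O_n)'$ is not equal to the scalar operators $\mathbb{C}1_H$. (ii) $\Phi_n$ is an operational extreme point, but not a numerical operational extreme point, of the set of completely positive maps $O_n\to O_n$. (iii) $\Psi_n$ is not an operational extreme point of the set of completely positive maps $O_n\to O_n$; moreover, $\Psi_n$ is not a Jordan homomorphism.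
   Context: Commutants are taken in $B(H)$. $\mathrm{Ad}\, v(x)=vxv^*$. For the set $S$ of completely positive maps $O_n\to O_n$: a map $\Phi\in S$ is an operational extreme point of $S$ if whenever $\Phi=\sum_{i=1}^m\mathrm{Ad}\,a_i\circ\Psi_i$ with $\Psi_i\in S$ and nonzero $a_1,\dots,a_m\in O_n$ with $\sum_i a_ia_i^*=1$, there exist $z_i\in\Phi(O_n)'$ with $\mathrm{Ad}\,a_i\circ\Psi_i=z_i\Phi$ for all $i$; it is a numerical operational extreme point if in every such decomposition the $z_i$ can be taken to be nonnegative real scalars. A self-adjoint linear map $\Phi$ is a Jordan homomorphism if $\Phi(a^2)=\Phi(a)^2$ for all self-adjoint $a$. $\phi_n$ is the unique state on $O_n$ with $\phi_n(ab)=\phi_n(ba)$ for $a\in O_n$ and $b$ in the closed span of $\{S_\mu S_\nu^*: |\mu|=|\nu|\}$. *)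

theory Defs
  imports "HOL-Analysis.Analysis"
begin

text \<open>A complex inner product space (inner product linear in the second argument),
complete with respect to the induced norm.\<close>
class chilbert = ab_group_add +
  fixes hscale :: "complex \<Rightarrow> 'a \<Rightarrow> 'a"
    and hinner :: "'a \<Rightarrow> 'a \<Rightarrow> complex"
  assumes hscale_add_right: "hscale c (x + y) = hscale c x + hscale c y"
      and hscale_add_left: "hscale (a + b) x = hscale a x + hscale b x"
      and hscale_assoc: "hscale a (hscale b x) = hscale (a * b) x"
      and hscale_one: "hscale 1 x = x"
      and hinner_conj: "hinner x y = cnj (hinner y x)"
      and hinner_add_right: "hinner x (y + z) = hinner x y + hinner x z"
      and hinner_scale_right: "hinner x (hscale c y) = c * hinner x y"
      and hinner_nonneg: "0 \<le> Re (hinner x x)"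
      and hinner_eq_zero: "hinner x x = 0 \<Longrightarrow> x = 0"
      and hcomplete: "(\<forall>e::real>0. \<exists>N::nat. \<forall>m\<ge>N. \<forall>k\<ge>N. sqrt (Re (hinner (X m - X k) (X m - X k))) < e)
          \<Longrightarrow> \<exists>L. \<forall>e::real>0. \<exists>N::nat. \<forall>k\<ge>N. sqrt (Re (hinner (X k - L) (X k - L))) < e"

definition hnorm :: "'a::chilbert \<Rightarrow> real" where
  "hnorm x = sqrt (Re (hinner x x))"

definition infinite_dim :: "'a::chilbert itself \<Rightarrow> bool" where
  "infinite_dim _ \<longleftrightarrow> (\<forall>F::'a set. finite F \<longrightarrow> (\<exists>x. \<forall>c. x \<noteq> (\<Sum>f\<in>F. hscale (c f) f)))"

definition bop :: "('a::chilbert \<Rightarrow> 'a) \<Rightarrow> bool" where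
  "bop T \<longleftrightarrow> (\<forall>x y. T (x + y) = T x + T y) \<and> (\<forall>c x. T (hscale c x) = hscale c (T x))
     \<and> (\<exists>K. \<forall>x. hnorm (T x) \<le> K * hnorm x)"

definition BH :: "('a::chilbert \<Rightarrow> 'a) set" where
  "BH = {T. bop T}"

definition adj :: "('a::chilbert \<Rightarrow> 'a) \<Rightarrow> ('a \<Rightarrow> 'a)" where
  "adj T = (THE S. \<forall>x y. hinner (T x) y = hinner x (S y))"

definition opnorm :: "('a::chilbert \<Rightarrow> 'a) \<Rightarrow> real" where
  "opnorm T = (SUP x\<in>{x. hnorm x \<le> 1}. hnorm (T x))"

definition opadd :: "('a::chilbert \<Rightarrow> 'a) \<Rightarrow> ('a \<Rightarrow> 'a) \<Rightarrow> ('a \<Rightarrow> 'a)" where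
  "opadd T U = (\<lambda>x. T x + U x)"

definition opscale :: "complex \<Rightarrow> ('a::chilbert \<Rightarrow> 'a) \<Rightarrow> ('a \<Rightarrow> 'a)" where
  "opscale c T = (\<lambda>x. hscale c (T x))"

definition isometry :: "('a::chilbert \<Rightarrow> 'a) \<Rightarrow> bool" where
  "isometry S \<longleftrightarrow> bop S \<and> adj S \<circ> S = id"

definition cstar_gen :: "('a::chilbert \<Rightarrow> 'a) set \<Rightarrow> ('a \<Rightarrow> 'a) set" where
  "cstar_gen G = \<Inter> {A. G \<subseteq> A \<and> A \<subseteq> BH
      \<and> (\<forall>T\<in>A. \<forall>U\<in>A. opadd T U \<in> A \<and> T \<circ> U \<in> A)
      \<and> (\<forall>c. \<forall>T\<in>A. opscale c T \<in> A)
      \<and> (\<forall>T\<in>A. adj T \<in> A)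
      \<and> (\<forall>X T. (\<forall>k. X k \<in> A) \<and> T \<in> BH \<and> (\<lambda>k. opnorm (\<lambda>x. X k x - T x)) \<longlonglongrightarrow> 0 \<longrightarrow> T \<in> A)}"

definition commutant :: "('a::chilbert \<Rightarrow> 'a) set \<Rightarrow> ('a \<Rightarrow> 'a) set" where
  "commutant M = {T\<in>BH. \<forall>y\<in>M. T \<circ> y = y \<circ> T}"

definition scalar_ops :: "('a::chilbert \<Rightarrow> 'a) set" where
  "scalar_ops = {opscale c id | c. True}"

definition matpos :: "nat \<Rightarrow> (nat \<Rightarrow> nat \<Rightarrow> ('a::chilbert \<Rightarrow> 'a)) \<Rightarrow> bool" where
  "matpos k X \<longleftrightarrow> (\<forall>h::nat \<Rightarrow> 'a. let z = (\<Sum>i<k. \<Sum>j<k. hinner (h i) (X i j (h j)))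
      in Im z = 0 \<and> 0 \<le> Re z)"

definition linear_on :: "('a::chilbert \<Rightarrow> 'a) set \<Rightarrow> (('a \<Rightarrow> 'a) \<Rightarrow> ('a \<Rightarrow> 'a)) \<Rightarrow> bool" where
  "linear_on A \<Phi> \<longleftrightarrow> (\<forall>x\<in>A. \<forall>y\<in>A. \<Phi> (opadd x y) = opadd (\<Phi> x) (\<Phi> y))
     \<and> (\<forall>c. \<forall>x\<in>A. \<Phi> (opscale c x) = opscale c (\<Phi> x))"

text \<open>The set of completely positive maps A \<rightarrow> A (maps only matter on A).\<close>
definition CP :: "('a::chilbert \<Rightarrow> 'a) set \<Rightarrow> (('a \<Rightarrow> 'a) \<Rightarrow> ('a \<Rightarrow> 'a)) \<Rightarrow> bool" where
  "CP A \<Phi> \<longleftrightarrow> linear_on A \<Phi> \<and> \<Phi> ` A \<subseteq> A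
     \<and> (\<forall>k X. (\<forall>i j. X i j \<in> A) \<and> matpos k X \<longrightarrow> matpos k (\<lambda>i j. \<Phi> (X i j)))"

definition Ad :: "('a::chilbert \<Rightarrow> 'a) \<Rightarrow> ('a \<Rightarrow> 'a) \<Rightarrow> ('a \<Rightarrow> 'a)" where
  "Ad a x = a \<circ> x \<circ> adj a"

definition admissible_decomp ::
  "('a::chilbert \<Rightarrow> 'a) set \<Rightarrow> (('a \<Rightarrow> 'a) \<Rightarrow> ('a \<Rightarrow> 'a)) \<Rightarrow> nat
     \<Rightarrow> (nat \<Rightarrow> ('a \<Rightarrow> 'a)) \<Rightarrow> (nat \<Rightarrow> (('a \<Rightarrow> 'a) \<Rightarrow> ('a \<Rightarrow> 'a))) \<Rightarrow> bool" where
  "admissible_decomp A \<Phi> m a \<Psi> \<longleftrightarrow>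
     (\<forall>i<m. CP A (\<Psi> i) \<and> a i \<in> A \<and> a i \<noteq> (\<lambda>_. 0))
     \<and> (\<forall>h. (\<Sum>i<m. a i (adj (a i) h)) = h)
     \<and> (\<forall>x\<in>A. \<forall>h. \<Phi> x h = (\<Sum>i<m. Ad (a i) (\<Psi> i x) h))"

definition operational_extreme :: "('a::chilbert \<Rightarrow> 'a) set \<Rightarrow> (('a \<Rightarrow> 'a) \<Rightarrow> ('a \<Rightarrow> 'a)) \<Rightarrow> bool" where
  "operational_extreme A \<Phi> \<longleftrightarrow> CP A \<Phi> \<and>
     (\<forall>m a \<Psi>. admissible_decomp A \<Phi> m a \<Psi> \<longrightarrow>
        (\<exists>z. \<forall>i<m. z i \<in> commutant (\<Phi> ` A) \<and> (\<forall>x\<in>A. Ad (a i) (\<Psi> i x) = z i \<circ> \<Phi> x)))"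

definition numerical_operational_extreme :: "('a::chilbert \<Rightarrow> 'a) set \<Rightarrow> (('a \<Rightarrow> 'a) \<Rightarrow> ('a \<Rightarrow> 'a)) \<Rightarrow> bool" where
  "numerical_operational_extreme A \<Phi> \<longleftrightarrow> CP A \<Phi> \<and>
     (\<forall>m a \<Psi>. admissible_decomp A \<Phi> m a \<Psi> \<longrightarrow>
        (\<exists>t::nat \<Rightarrow> real. \<forall>i<m. 0 \<le> t i \<and>
            (\<forall>x\<in>A. Ad (a i) (\<Psi> i x) = opscale (complex_of_real (t i)) (\<Phi> x))))"

definition jordan_hom_on :: "('a::chilbert \<Rightarrow> 'a) set \<Rightarrow> (('a \<Rightarrow> 'a) \<Rightarrow> ('a \<Rightarrow> 'a)) \<Rightarrow> bool" where
  "jordan_hom_on A \<Phi> \<longleftrightarrow> linear_on A \<Phi> \<and> (\<forall>x\<in>A. \<Phi> (adj x) = adj (\<Phi> x))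
     \<and> (\<forall>a\<in>A. adj a = a \<longrightarrow> \<Phi> (a \<circ> a) = \<Phi> a \<circ> \<Phi> a)"

end

theory Submission
  imports Defs
begin

text \<open>
\<open>\<Phi>\<^sub>n = \<Sum>\<^sub>i Ad S\<^sub>i\<close> is a unital *-endomorphism of \<open>O\<^sub>n\<close>, and the range projection \<open>S\<^sub>0 S\<^sub>0*\<close>
commutes with its image without being scalar; this gives (i), and the decomposition
\<open>\<Phi>\<^sub>n = \<Sum>\<^sub>i Ad(S\<^sub>i S\<^sub>i*) \<circ> \<Phi>\<^sub>n\<close> has non-scalar multipliers, so \<open>\<Phi>\<^sub>n\<close> is not numerically extreme.
Operational extremality holds because every completely positive summand \<open>\<theta>\<close> of a unital
*-homomorphism \<open>\<Phi>\<close> satisfies \<open>\<theta>(b) = \<theta>(1) \<Phi>(b)\<close>: the positive matrix \<open>\<theta>([[1,b],[b*,b*b]])\<close> lies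
below \<open>[[1,\<Phi>b],[(\<Phi>b)*,(\<Phi>b)*\<Phi>b]]\<close>, whose quadratic form vanishes on the vectors \<open>(\<Phi>b k, -k)\<close>, so the
off-diagonal entries must factor through \<open>\<Phi>b\<close>. Taking adjoints shows that \<open>\<theta>(1)\<close> commutes with the
range of \<open>\<Phi>\<close>. For \<open>\<Psi>\<^sub>n = \<Sum>\<^sub>i Ad(n\<^sup>-\<^sup>1\<^sup>/\<^sup>2) \<circ> Ad(S\<^sub>i*)\<close> one has \<open>\<Psi>\<^sub>n(1) = 1\<close> but \<open>\<Psi>\<^sub>n(S\<^sub>0 S\<^sub>0*) = 1/n\<close>;
this contradicts \<open>\<Psi>\<^sub>n(p\<^sup>2) = \<Psi>\<^sub>n(p)\<^sup>2\<close> as well as any factorization of the summands through \<open>\<Psi>\<^sub>n\<close>.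
The adjoint of a bounded operator, needed throughout, comes from the Riesz representation theorem,
proved from completeness via a vector of least norm in a level set of the functional.\<close>

lemma mult_cnj_cmod: "z * cnj z = (complex_of_real (cmod z))^2"
  by (metis complex_norm_square of_real_power)

lemma cnj_mult_cmod: "cnj z * z = (complex_of_real (cmod z))^2"
  by (metis mult_cnj_cmod mult.commute)

lemma nonneg_quadratic_imp_linear_coeff_zero:
  fixes b :: complex and c :: real
  assumes "\<And>t. 0 \<le> 2 * Re (t * b) + (cmod t)^2 * c"
  shows "b = 0"
proof (rule ccontr)
  assume nz: "b \<noteq> 0"
  define e :: real where "e = 1 / (\<bar>c\<bar> + 1)"
  have e0: "e > 0" unfolding e_def by simp
  have ec: "e * c < 1"
  proof -
    have "e * c \<le> e * \<bar>c\<bar>" using e0 by (simp add: mult_left_mono)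
    also have "\<dots> < 1" unfolding e_def by (simp add: field_simps)
    finally show ?thesis .
  qed
  define t where "t = - complex_of_real e * cnj b"
  have "t * b = - complex_of_real (e * (cmod b)^2)"
    unfolding t_def by (simp add: mult_cnj_cmod mult.commute mult.left_commute)
  hence "Re (t * b) = - e * (cmod b)^2" by simp
  moreover have "(cmod t)^2 = e^2 * (cmod b)^2"
    unfolding t_def using e0 by (simp add: norm_mult power_mult_distrib)
  ultimately have "0 \<le> e * (cmod b)^2 * (e * c - 2)"
    using assms[of t] by (simp add: algebra_simps power2_eq_square)
  moreover have "e * (cmod b)^2 > 0" using e0 nz by simp
  ultimately have "e * c - 2 \<ge> 0" by (simp add: zero_le_mult_iff)
  thus False using ec by simp
qed

lemma hscale_zero_left [simp]: "hscale 0 x = (0::'a::chilbert)"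
  using hscale_add_left[of 0 0 x] by simp

lemma hscale_zero_right [simp]: "hscale c (0::'a::chilbert) = 0"
  using hscale_add_right[of c 0 0] by simp

lemma hscale_minus_left: "hscale (- c) x = - hscale c (x::'a::chilbert)"
  by (metis add.right_inverse hscale_add_left hscale_zero_left minus_unique)

lemma hscale_sum_right: "hscale c (\<Sum>i\<in>A. f i) = (\<Sum>i\<in>A. hscale c (f i::'a::chilbert))"
  by (induction A rule: infinite_finite_induct) (auto simp: hscale_add_right)

lemma hscale_sum_left: "hscale (\<Sum>i\<in>A. f i) x = (\<Sum>i\<in>A. hscale (f i) (x::'a::chilbert))"
  by (induction A rule: infinite_finite_induct) (auto simp: hscale_add_left)

lemma sum_const_hscale: "(\<Sum>i<n. h) = hscale (of_nat n) (h::'a::chilbert)"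
  using hscale_sum_left[of "\<lambda>_. 1" "{..<n}" h] by (simp add: hscale_one)

lemma hscale_cancel_left:
  assumes "hscale c v = hscale d v" and "v \<noteq> (0::'a::chilbert)"
  shows "c = d"
proof (rule ccontr)
  assume "c \<noteq> d"
  have "hscale (c - d) v = 0"
    using assms(1) hscale_add_left[of c "-d" v] by (simp add: hscale_minus_left)
  moreover have "v = hscale (1 / (c - d)) (hscale (c - d) v)"
    using \<open>c \<noteq> d\<close> by (simp add: hscale_assoc hscale_one)
  ultimately show False using assms(2) by simp
qed

lemma hinner_add_left: "hinner (x + y) z = hinner x z + hinner y (z::'a::chilbert)"
  by (metis complex_cnj_add hinner_add_right hinner_conj)

lemma hinner_scale_left: "hinner (hscale c x) y = cnj c * hinner x (y::'a::chilbert)"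
  by (metis complex_cnj_mult hinner_conj hinner_scale_right)

lemma hinner_zero_right [simp]: "hinner x (0::'a::chilbert) = 0"
  using hinner_scale_right[of x 0 0] by simp

lemma hinner_zero_left [simp]: "hinner (0::'a::chilbert) x = 0"
  by (metis complex_cnj_zero hinner_conj hinner_zero_right)

lemma hinner_minus_right: "hinner x (- y) = - hinner x (y::'a::chilbert)"
  by (metis add_eq_0_iff2 hinner_add_right hinner_zero_right)

lemma hinner_minus_left: "hinner (- x) y = - hinner x (y::'a::chilbert)"
  by (metis complex_cnj_minus hinner_conj hinner_minus_right)

lemma hinner_diff_right: "hinner x (y - z) = hinner x y - hinner x (z::'a::chilbert)"
  by (simp only: diff_conv_add_uminus hinner_add_right hinner_minus_right)

lemma hinner_sum_right: "hinner x (\<Sum>i\<in>A. f i) = (\<Sum>i\<in>A. hinner x (f i::'a::chilbert))"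
  by (induction A rule: infinite_finite_induct) (auto simp: hinner_add_right)

lemma hinner_sum_left: "hinner (\<Sum>i\<in>A. f i) x = (\<Sum>i\<in>A. hinner (f i) (x::'a::chilbert))"
  by (induction A rule: infinite_finite_induct) (auto simp: hinner_add_left)

definition hsqnorm :: "'a::chilbert \<Rightarrow> real" where
  "hsqnorm x = Re (hinner x x)"

lemma hinner_self_real: "hinner x x = complex_of_real (hsqnorm (x::'a::chilbert))"
proof -
  have "Im (hinner x x) = 0" by (metis Reals_cnj_iff complex_is_Real_iff hinner_conj)
  thus ?thesis unfolding hsqnorm_def by (simp add: complex_eq_iff)
qed

lemma hsqnorm_nonneg: "0 \<le> hsqnorm (x::'a::chilbert)"
  unfolding hsqnorm_def by (rule hinner_nonneg)

lemma hsqnorm_eq_0_iff: "hsqnorm (x::'a::chilbert) = 0 \<longleftrightarrow> x = 0"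
  by (metis hinner_eq_zero hinner_self_real hinner_zero_left of_real_eq_0_iff)

lemma hinner_right_ext: "(\<And>x. hinner x y = hinner x z) \<Longrightarrow> y = (z::'a::chilbert)"
  by (metis diff_eq_eq hinner_diff_right hinner_eq_zero diff_self)

lemma hsqnorm_add_hscale:
  "hsqnorm (x + hscale t y) = hsqnorm x + 2 * Re (t * hinner x y) + (cmod t)^2 * hsqnorm (y::'a::chilbert)"
proof -
  have "hinner (x + hscale t y) (x + hscale t y) =
     hinner x x + t * hinner x y + cnj (t * hinner x y) + (cnj t * t) * hinner y y"
    using hinner_conj[of y x]
    by (simp add: hinner_add_left hinner_add_right hinner_scale_left hinner_scale_right algebra_simps)
  moreover have "cnj t * t = complex_of_real ((cmod t)^2)"
    by (simp add: cnj_mult_cmod)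
  ultimately show ?thesis unfolding hsqnorm_def by simp
qed

lemma hsqnorm_add:
  "hsqnorm (x + y) = hsqnorm x + 2 * Re (hinner x y) + hsqnorm (y::'a::chilbert)"
  using hsqnorm_add_hscale[of x 1 y] by (simp add: hscale_one)

lemma hsqnorm_diff:
  "hsqnorm (x - y) = hsqnorm x - 2 * Re (hinner x y) + hsqnorm (y::'a::chilbert)"
  using hsqnorm_add_hscale[of x "-1" y] by (simp add: hscale_minus_left hscale_one)

lemma parallelogram_law:
  "hsqnorm (x + y) + hsqnorm (x - y) = 2 * hsqnorm x + 2 * hsqnorm (y::'a::chilbert)"
  by (simp add: hsqnorm_add hsqnorm_diff)

lemma hsqnorm_hscale: "hsqnorm (hscale c x) = (cmod c)^2 * hsqnorm (x::'a::chilbert)"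
  using hsqnorm_add_hscale[of 0 c x] by (simp add: hsqnorm_def)

lemma cauchy_schwarz_sq: "(cmod (hinner x y))^2 \<le> hsqnorm x * hsqnorm (y::'a::chilbert)"
proof (cases "y = 0")
  case True thus ?thesis by (simp add: hsqnorm_def)
next
  case False
  hence ny: "hsqnorm y > 0" using hsqnorm_nonneg hsqnorm_eq_0_iff by (metis order_le_less)
  define b where "b = hinner x y"
  define t where "t = - cnj b / complex_of_real (hsqnorm y)"
  have "t * b = - complex_of_real ((cmod b)^2 / hsqnorm y)"
    unfolding t_def by (simp add: mult_cnj_cmod mult.commute)
  moreover have "(cmod t)^2 = (cmod b)^2 / (hsqnorm y)^2"
    unfolding t_def using ny by (simp add: norm_divide power_divide)
  moreover have "0 \<le> hsqnorm (x + hscale t y)" by (rule hsqnorm_nonneg)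
  ultimately have "0 \<le> hsqnorm x - (cmod b)^2 / hsqnorm y"
    using ny unfolding hsqnorm_add_hscale b_def[symmetric] by (simp add: power2_eq_square)
  thus ?thesis using ny unfolding b_def by (simp add: pos_divide_le_eq mult.commute)
qed

lemma hnorm_eq_sqrt: "hnorm x = sqrt (hsqnorm (x::'a::chilbert))"
  unfolding hnorm_def hsqnorm_def ..

lemma hnorm_nonneg: "0 \<le> hnorm (x::'a::chilbert)"
  by (simp add: hnorm_eq_sqrt hsqnorm_nonneg)

lemma hnorm_power2: "(hnorm x)^2 = hsqnorm (x::'a::chilbert)"
  by (simp add: hnorm_eq_sqrt hsqnorm_nonneg)

lemma cauchy_schwarz: "cmod (hinner x y) \<le> hnorm x * hnorm (y::'a::chilbert)"
  by (metis cauchy_schwarz_sq hnorm_eq_sqrt real_le_rsqrt real_sqrt_mult)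

lemma hnorm_triangle: "hnorm (x + y) \<le> hnorm x + hnorm (y::'a::chilbert)"
proof -
  have "Re (hinner x y) \<le> hnorm x * hnorm y"
    using complex_Re_le_cmod cauchy_schwarz order_trans by blast
  hence "(hnorm (x + y))^2 \<le> (hnorm x)^2 + 2 * (hnorm x * hnorm y) + (hnorm y)^2"
    by (simp add: hnorm_power2 hsqnorm_add)
  hence "(hnorm (x + y))^2 \<le> (hnorm x + hnorm y)^2"
    by (simp add: power2_sum)
  thus ?thesis using hnorm_nonneg by (meson power2_le_imp_le add_nonneg_nonneg)
qed

lemma hnorm_hscale: "hnorm (hscale c x) = cmod c * hnorm (x::'a::chilbert)"
  by (simp add: hnorm_eq_sqrt hsqnorm_hscale real_sqrt_mult)

lemma hnorm_minus_commute: "hnorm (x - y) = hnorm (y - (x::'a::chilbert))"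
  using hnorm_hscale[of "-1" "x - y"] by (simp add: hscale_minus_left hscale_one)

lemma hnorm_diff_triangle: "\<bar>hnorm x - hnorm y\<bar> \<le> hnorm (x - (y::'a::chilbert))"
  using hnorm_triangle[of "x - y" y] hnorm_triangle[of "y - x" x] hnorm_minus_commute[of x y]
  by simp

lemma cauchy_imp_hconverges:
  fixes X :: "nat \<Rightarrow> 'a::chilbert"
  assumes "\<And>e. e > 0 \<Longrightarrow> \<exists>N. \<forall>m\<ge>N. \<forall>k\<ge>N. hnorm (X m - X k) < e"
  shows "\<exists>L. (\<lambda>k. hnorm (X k - L)) \<longlonglongrightarrow> 0"
proof -
  obtain L where "\<forall>e>0. \<exists>N. \<forall>k\<ge>N. hnorm (X k - L) < e"
    using hcomplete[of X] assms unfolding hnorm_def by blast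
  hence "(\<lambda>k. hnorm (X k - L)) \<longlonglongrightarrow> 0"
    by (intro LIMSEQ_I) (simp add: hnorm_nonneg)
  thus ?thesis ..
qed

lemma minimizing_sequence_cauchy:
  fixes M :: "'a::chilbert set"
  assumes midpoint: "\<And>x y. x \<in> M \<Longrightarrow> y \<in> M \<Longrightarrow> hscale (1/2) (x + y) \<in> M"
    and lower: "\<And>x. x \<in> M \<Longrightarrow> d \<le> hsqnorm x"
    and X: "\<And>k. X k \<in> M" "\<And>k. hsqnorm (X k) \<le> d + inverse (Suc k)"
    and "e > 0"
  shows "\<exists>N. \<forall>m\<ge>N. \<forall>k\<ge>N. hnorm (X m - X k) < e"
proof -
  have bound: "hsqnorm (X m - X k) \<le> 2 * inverse (Suc m) + 2 * inverse (Suc k)" for m k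
  proof -
    have "d \<le> hsqnorm (hscale (1/2) (X m + X k))" using midpoint X(1) lower by blast
    hence "4 * d \<le> hsqnorm (X m + X k)" by (simp add: hsqnorm_hscale power2_eq_square)
    thus ?thesis using parallelogram_law[of "X m" "X k"] X(2)[of m] X(2)[of k] by simp
  qed
  obtain N where N: "inverse (Suc N) < e^2 / 4" using \<open>e > 0\<close> reals_Archimedean[of "e^2 / 4"] by auto
  have "hnorm (X m - X k) < e" if "m \<ge> N" "k \<ge> N" for m k
  proof -
    have "inverse (Suc m) \<le> inverse (Suc N)" "inverse (Suc k) \<le> inverse (Suc N)"
      using that by (simp_all add: le_imp_inverse_le)
    hence "hsqnorm (X m - X k) < e^2" using bound[of m k] N by linarith
    hence "sqrt (hsqnorm (X m - X k)) < sqrt (e^2)" by (rule real_sqrt_less_mono)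
    thus ?thesis using \<open>e > 0\<close> by (simp add: hnorm_eq_sqrt)
  qed
  thus ?thesis by blast
qed

lemma hsqnorm_tendsto:
  assumes "(\<lambda>k. hnorm (X k - L)) \<longlonglongrightarrow> 0"
  shows "(\<lambda>k. hsqnorm (X k)) \<longlonglongrightarrow> hsqnorm (L::'a::chilbert)"
proof -
  have "(\<lambda>k. hnorm (X k)) \<longlonglongrightarrow> hnorm L"
  proof (rule tendsto_sandwich)
    have "hnorm L - hnorm (X k - L) \<le> hnorm (X k) \<and> hnorm (X k) \<le> hnorm L + hnorm (X k - L)" for k
      using hnorm_diff_triangle[of "X k" L] unfolding abs_le_iff by linarith
    thus "\<forall>\<^sub>F k in sequentially. hnorm L - hnorm (X k - L) \<le> hnorm (X k)"
      "\<forall>\<^sub>F k in sequentially. hnorm (X k) \<le> hnorm L + hnorm (X k - L)"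
      by (simp_all add: always_eventually)
    show "(\<lambda>k. hnorm L - hnorm (X k - L)) \<longlonglongrightarrow> hnorm L"
      "(\<lambda>k. hnorm L + hnorm (X k - L)) \<longlonglongrightarrow> hnorm L"
      using tendsto_diff[OF tendsto_const assms] tendsto_add[OF tendsto_const assms] by simp_all
  qed
  thus ?thesis unfolding hnorm_power2[symmetric] by (rule tendsto_power)
qed

lemma min_hsqnorm_exists:
  fixes M :: "'a::chilbert set"
  assumes "x0 \<in> M"
    and midpoint: "\<And>x y. x \<in> M \<Longrightarrow> y \<in> M \<Longrightarrow> hscale (1/2) (x + y) \<in> M"
    and closed: "\<And>X L. (\<And>k. X k \<in> M) \<Longrightarrow> (\<lambda>k. hnorm (X k - L)) \<longlonglongrightarrow> 0 \<Longrightarrow> L \<in> M"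
  shows "\<exists>L\<in>M. \<forall>x\<in>M. hsqnorm L \<le> hsqnorm x"
proof -
  define d where "d = Inf (hsqnorm ` M)"
  have bdd: "bdd_below (hsqnorm ` M)" by (rule bdd_belowI[of _ 0]) (auto simp: hsqnorm_nonneg)
  have lower: "d \<le> hsqnorm x" if "x \<in> M" for x
    unfolding d_def using bdd that by (simp add: cInf_lower)
  have "\<exists>x\<in>M. hsqnorm x < d + inverse (Suc k)" for k
    using cInf_lessD[of "hsqnorm ` M" "d + inverse (Suc k)"] \<open>x0 \<in> M\<close> unfolding d_def by auto
  then obtain X where X: "\<And>k. X k \<in> M" "\<And>k. hsqnorm (X k) < d + inverse (Suc k)"
    by metis
  obtain L where L: "(\<lambda>k. hnorm (X k - L)) \<longlonglongrightarrow> 0"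
    using cauchy_imp_hconverges minimizing_sequence_cauchy[OF midpoint lower X(1) less_imp_le[OF X(2)]]
    by blast
  have "(\<lambda>k. hsqnorm (X k)) \<longlonglongrightarrow> d"
  proof (rule tendsto_sandwich[OF _ _ tendsto_const LIMSEQ_inverse_real_of_nat_add])
    show "\<forall>\<^sub>F k in sequentially. d \<le> hsqnorm (X k)"
      using lower X(1) by (intro always_eventually allI) blast
    show "\<forall>\<^sub>F k in sequentially. hsqnorm (X k) \<le> d + inverse (Suc k)"
      using X(2) by (intro always_eventually allI less_imp_le)
  qed
  hence "hsqnorm L = d" using hsqnorm_tendsto[OF L] by (rule LIMSEQ_unique[symmetric])
  thus ?thesis using closed[OF X(1) L] lower by auto
qed

lemma bounded_additive_level_set_closed:
  fixes f :: "'a::chilbert \<Rightarrow> complex"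
  assumes add: "\<And>x y. f (x + y) = f x + f y" and bounded: "\<And>x. cmod (f x) \<le> K * hnorm x"
    and X: "\<And>k. f (X k) = c" and lim: "(\<lambda>k. hnorm (X k - L)) \<longlonglongrightarrow> 0"
  shows "f L = c"
proof -
  have "cmod (c - f L) \<le> K * hnorm (X k - L)" for k
    using bounded[of "X k - L"] add[of "X k - L" L] X[of k] by simp
  moreover have "(\<lambda>k. K * hnorm (X k - L)) \<longlonglongrightarrow> 0" using lim by (rule tendsto_mult_right_zero)
  ultimately have "cmod (c - f L) \<le> 0" by (intro LIMSEQ_le_const) auto
  thus ?thesis by simp
qed

lemma riesz_representation:
  fixes f :: "'a::chilbert \<Rightarrow> complex"
  assumes add: "\<And>x y. f (x + y) = f x + f y" and scale: "\<And>c x. f (hscale c x) = c * f x"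
    and bounded: "\<And>x. cmod (f x) \<le> K * hnorm x"
  shows "\<exists>w. \<forall>x. f x = hinner w x"
proof (cases "\<forall>x. f x = 0")
  case True thus ?thesis by (intro exI[of _ 0]) simp
next
  case False
  then obtain x0 where "f x0 \<noteq> 0" by blast
  have f_diff: "f (x - y) = f x - f y" for x y using add[of "x - y" y] by simp
  have "\<exists>L\<in>{x. f x = 1}. \<forall>x\<in>{x. f x = 1}. hsqnorm L \<le> hsqnorm x"
  proof (rule min_hsqnorm_exists)
    show "hscale (1 / f x0) x0 \<in> {x. f x = 1}" using \<open>f x0 \<noteq> 0\<close> by (simp add: scale)
    show "hscale (1/2) (x + y) \<in> {x. f x = 1}" if "x \<in> {x. f x = 1}" "y \<in> {x. f x = 1}" for x y
      using that by (simp add: scale add)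
    show "L \<in> {x. f x = 1}" if "\<And>k. X k \<in> {x. f x = 1}" "(\<lambda>k. hnorm (X k - L)) \<longlonglongrightarrow> 0" for X L
      using bounded_additive_level_set_closed[OF add bounded] that by blast
  qed
  then obtain L where L: "f L = 1" and min: "\<And>x. f x = 1 \<Longrightarrow> hsqnorm L \<le> hsqnorm x" by auto
  have orth: "hinner L y = 0" if "f y = 0" for y
  proof (rule nonneg_quadratic_imp_linear_coeff_zero)
    fix t
    have "hsqnorm L \<le> hsqnorm (L + hscale t y)" using min L that by (simp add: add scale)
    thus "0 \<le> 2 * Re (t * hinner L y) + (cmod t)^2 * hsqnorm y" by (simp add: hsqnorm_add_hscale)
  qed
  have "f 0 = 0" using scale[of 0 0] by simp
  hence "hsqnorm L \<noteq> 0" using L by (auto simp: hsqnorm_eq_0_iff)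
  show ?thesis
  proof (intro exI allI)
    fix x
    have "hinner L (x - hscale (f x) L) = 0" by (rule orth) (simp add: f_diff scale L)
    hence "hinner L x = f x * complex_of_real (hsqnorm L)"
      by (simp add: hinner_diff_right hinner_scale_right hinner_self_real)
    thus "f x = hinner (hscale (1 / complex_of_real (hsqnorm L)) L) x"
      using \<open>hsqnorm L \<noteq> 0\<close> by (simp add: hinner_scale_left)
  qed
qed

lemma bop_add: "bop T \<Longrightarrow> T (x + y) = T x + T y"
  by (simp add: bop_def)

lemma bop_hscale: "bop T \<Longrightarrow> T (hscale c x) = hscale c (T x)"
  by (simp add: bop_def)

lemma bop_zero: "bop T \<Longrightarrow> T 0 = (0::'a::chilbert)"
  using bop_hscale[of T 0 0] by simp

lemma bop_minus: "bop T \<Longrightarrow> T (- x) = - T (x::'a::chilbert)"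
  by (metis bop_add bop_zero add.right_inverse minus_unique)

lemma bop_sum: "bop T \<Longrightarrow> T (\<Sum>i\<in>A. f i) = (\<Sum>i\<in>A. T (f i::'a::chilbert))"
  by (induction A rule: infinite_finite_induct) (auto simp: bop_add bop_zero)

lemma bop_bounded_nonneg:
  assumes "bop (T::'a::chilbert \<Rightarrow> 'a)"
  obtains K where "K \<ge> 0" "\<And>x. hnorm (T x) \<le> K * hnorm x"
proof -
  obtain K where K: "\<And>x. hnorm (T x) \<le> K * hnorm x" using assms unfolding bop_def by blast
  have "hnorm (T x) \<le> max K 0 * hnorm x" for x
    by (meson K order_trans mult_right_mono max.cobounded1 hnorm_nonneg)
  thus thesis using that[of "max K 0"] by simp
qed

lemma adj_unique:
  assumes "\<And>x y. hinner (T x) y = hinner x (U y)"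
  shows "adj T = (U::'a::chilbert \<Rightarrow> 'a)"
  unfolding adj_def
proof (rule the_equality)
  show "\<forall>x y. hinner (T x) y = hinner x (U y)" using assms by blast
  show "U' = U" if "\<forall>x y. hinner (T x) y = hinner x (U' y)" for U'
    using that assms by (metis hinner_right_ext ext)
qed

lemma hinner_adj_right: "bop T \<Longrightarrow> hinner (T x) y = hinner x (adj T y :: 'a::chilbert)"
proof -
  assume T: "bop T"
  obtain K where "K \<ge> 0" and K: "\<And>x. hnorm (T x) \<le> K * hnorm x"
    using bop_bounded_nonneg[OF T] by metis
  have "\<exists>w. \<forall>x. hinner y (T x) = hinner w x" for y
  proof (rule riesz_representation)
    show "hinner y (T (x + z)) = hinner y (T x) + hinner y (T z)" for x z
      by (simp add: bop_add[OF T] hinner_add_right)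
    show "hinner y (T (hscale c x)) = c * hinner y (T x)" for c x
      by (simp add: bop_hscale[OF T] hinner_scale_right)
    show "cmod (hinner y (T x)) \<le> (hnorm y * K) * hnorm x" for x
      using cauchy_schwarz[of y "T x"] mult_left_mono[OF K[of x] hnorm_nonneg[of y]]
      by (simp add: mult.assoc)
  qed
  then obtain U where "\<And>y x. hinner y (T x) = hinner (U y) x" by metis
  hence "hinner (T x) y = hinner x (U y)" for x y by (metis hinner_conj)
  hence "adj T = U" by (rule adj_unique)
  thus ?thesis by (metis \<open>\<And>x y. hinner (T x) y = hinner x (U y)\<close>)
qed

lemma hinner_adj_left: "bop T \<Longrightarrow> hinner (adj T y) x = hinner y (T x :: 'a::chilbert)"
  by (metis hinner_adj_right hinner_conj)

lemma bop_adj: "bop T \<Longrightarrow> bop (adj (T::'a::chilbert \<Rightarrow> 'a))"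
proof -
  assume T: "bop T"
  obtain K where "K \<ge> 0" and K: "\<And>x. hnorm (T x) \<le> K * hnorm x"
    using bop_bounded_nonneg[OF T] by metis
  have "hnorm (adj T y) \<le> K * hnorm y" for y
  proof -
    have "(hnorm (adj T y))^2 = Re (hinner (T (adj T y)) y)"
      by (simp add: hnorm_power2 hsqnorm_def hinner_adj_right[OF T])
    also have "\<dots> \<le> hnorm (T (adj T y)) * hnorm y"
      using complex_Re_le_cmod cauchy_schwarz order_trans by blast
    also have "\<dots> \<le> hnorm (adj T y) * (K * hnorm y)"
      using mult_right_mono[OF K hnorm_nonneg] by (simp add: mult_ac)
    finally have "hnorm (adj T y) * hnorm (adj T y) \<le> hnorm (adj T y) * (K * hnorm y)"
      by (simp add: power2_eq_square)
    moreover have "0 \<le> K * hnorm y" using \<open>K \<ge> 0\<close> hnorm_nonneg[of y] by simp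
    ultimately show ?thesis
      using hnorm_nonneg[of "adj T y"] mult_le_cancel_left_pos[of "hnorm (adj T y)"]
      by (cases "hnorm (adj T y) = 0") simp_all
  qed
  moreover have "adj T (y + z) = adj T y + adj T z" for y z
    by (rule hinner_right_ext) (simp add: hinner_adj_right[OF T, symmetric] hinner_add_right)
  moreover have "adj T (hscale c y) = hscale c (adj T y)" for c y
    by (rule hinner_right_ext) (simp add: hinner_adj_right[OF T, symmetric] hinner_scale_right)
  ultimately show ?thesis unfolding bop_def by blast
qed

lemma adj_adj: "bop T \<Longrightarrow> adj (adj T) = (T::'a::chilbert \<Rightarrow> 'a)"
  by (intro adj_unique) (simp add: hinner_adj_left)

lemma adj_comp: "bop T \<Longrightarrow> bop U \<Longrightarrow> adj (T \<circ> U) = adj U \<circ> adj (T::'a::chilbert \<Rightarrow> 'a)"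
  by (intro adj_unique) (simp add: hinner_adj_right)

lemma adj_id: "adj (id::'a::chilbert \<Rightarrow> 'a) = id"
  by (intro adj_unique) simp

lemma adj_opscale: "bop T \<Longrightarrow> adj (opscale c T) = opscale (cnj c) (adj (T::'a::chilbert \<Rightarrow> 'a))"
  by (intro adj_unique) (simp add: opscale_def hinner_scale_left hinner_scale_right hinner_adj_right)

lemma adj_sum:
  "(\<And>i. i \<in> I \<Longrightarrow> bop (f i)) \<Longrightarrow> adj (\<lambda>h. \<Sum>i\<in>I. f i (h::'a::chilbert)) = (\<lambda>h. \<Sum>i\<in>I. adj (f i) h)"
  by (intro adj_unique) (simp add: hinner_sum_left hinner_sum_right hinner_adj_right)

lemma bop_comp: "bop T \<Longrightarrow> bop U \<Longrightarrow> bop (T \<circ> (U::'a::chilbert \<Rightarrow> 'a))"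
proof -
  assume T: "bop T" and U: "bop U"
  obtain K where "K \<ge> 0" and K: "\<And>x. hnorm (T x) \<le> K * hnorm x"
    using bop_bounded_nonneg[OF T] by metis
  obtain L where L: "\<And>x. hnorm (U x) \<le> L * hnorm x"
    using bop_bounded_nonneg[OF U] by metis
  have "hnorm (T (U x)) \<le> (K * L) * hnorm x" for x
    using K[of "U x"] mult_left_mono[OF L \<open>K \<ge> 0\<close>, of x] by (simp add: mult.assoc)
  thus ?thesis using T U unfolding bop_def by auto
qed

lemma bop_id: "bop (id::'a::chilbert \<Rightarrow> 'a)"
  unfolding bop_def by (intro conjI exI[of _ 1]) auto

lemma bop_zero_map: "bop (\<lambda>_. 0::'a::chilbert)"
  unfolding bop_def by (intro conjI exI[of _ 0]) (auto simp: hnorm_def)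

lemma bop_add_map: "bop T \<Longrightarrow> bop U \<Longrightarrow> bop (\<lambda>h. T h + (U h::'a::chilbert))"
proof -
  assume T: "bop T" and U: "bop U"
  obtain K where K: "\<And>x. hnorm (T x) \<le> K * hnorm x" using bop_bounded_nonneg[OF T] by metis
  obtain L where L: "\<And>x. hnorm (U x) \<le> L * hnorm x" using bop_bounded_nonneg[OF U] by metis
  have "hnorm (T x + U x) \<le> (K + L) * hnorm x" for x
    using hnorm_triangle[of "T x" "U x"] K[of x] L[of x] by (simp add: distrib_right)
  moreover have "T (x + y) + U (x + y) = (T x + U x) + (T y + U y)" for x y
    using T U by (simp add: bop_add ac_simps)
  moreover have "T (hscale c x) + U (hscale c x) = hscale c (T x + U x)" for c x
    using T U by (simp add: bop_hscale hscale_add_right)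
  ultimately show ?thesis unfolding bop_def by blast
qed

lemma bop_opadd: "bop T \<Longrightarrow> bop U \<Longrightarrow> bop (opadd T (U::'a::chilbert \<Rightarrow> 'a))"
  unfolding opadd_def by (rule bop_add_map)

lemma bop_opscale: "bop T \<Longrightarrow> bop (opscale c (T::'a::chilbert \<Rightarrow> 'a))"
proof -
  assume T: "bop T"
  obtain K where K: "\<And>x. hnorm (T x) \<le> K * hnorm x" using bop_bounded_nonneg[OF T] by metis
  have "hnorm (hscale c (T x)) \<le> (cmod c * K) * hnorm x" for x
    using K[of x] by (simp add: hnorm_hscale mult.assoc mult_left_mono)
  moreover have "hscale c (T (hscale d x)) = hscale d (hscale c (T x))" for d x
    using T by (simp add: bop_hscale hscale_assoc mult.commute)
  ultimately show ?thesis
    using T unfolding bop_def opscale_def by (auto simp: hscale_add_right)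
qed

lemma bop_sum_map:
  "finite I \<Longrightarrow> (\<And>i. i \<in> I \<Longrightarrow> bop (f i)) \<Longrightarrow> bop (\<lambda>h. \<Sum>i\<in>I. f i (h::'a::chilbert))"
  by (induction I rule: finite_induct) (simp_all add: bop_zero_map bop_add_map)

lemma cstar_gen_subset_BH: "G \<subseteq> BH \<Longrightarrow> cstar_gen G \<subseteq> (BH::('a::chilbert \<Rightarrow> 'a) set)"
  unfolding cstar_gen_def by (rule Inter_lower) (auto simp: BH_def bop_opadd bop_comp bop_opscale bop_adj)

lemma generators_subset_cstar_gen: "G \<subseteq> cstar_gen (G::('a::chilbert \<Rightarrow> 'a) set)"
  unfolding cstar_gen_def by blast

lemma cstar_gen_opadd:
  "T \<in> cstar_gen G \<Longrightarrow> U \<in> cstar_gen G \<Longrightarrow> opadd T U \<in> cstar_gen (G::('a::chilbert \<Rightarrow> 'a) set)"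
  unfolding cstar_gen_def by blast

lemma cstar_gen_comp:
  "T \<in> cstar_gen G \<Longrightarrow> U \<in> cstar_gen G \<Longrightarrow> T \<circ> U \<in> cstar_gen (G::('a::chilbert \<Rightarrow> 'a) set)"
  unfolding cstar_gen_def by blast

lemma cstar_gen_opscale: "T \<in> cstar_gen G \<Longrightarrow> opscale c T \<in> cstar_gen (G::('a::chilbert \<Rightarrow> 'a) set)"
  unfolding cstar_gen_def by blast

lemma cstar_gen_adj: "T \<in> cstar_gen G \<Longrightarrow> adj T \<in> cstar_gen (G::('a::chilbert \<Rightarrow> 'a) set)"
  unfolding cstar_gen_def by blast

lemma cstar_gen_zero: "G \<noteq> {} \<Longrightarrow> (\<lambda>_. 0) \<in> cstar_gen (G::('a::chilbert \<Rightarrow> 'a) set)"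
proof -
  assume "G \<noteq> {}"
  then obtain T where "T \<in> G" by blast
  hence "opscale 0 T \<in> cstar_gen G"
    using generators_subset_cstar_gen cstar_gen_opscale by blast
  thus ?thesis by (simp add: opscale_def)
qed

lemma cstar_gen_sum:
  assumes "G \<noteq> {}"
  shows "finite I \<Longrightarrow> (\<And>i. i \<in> I \<Longrightarrow> f i \<in> cstar_gen G) \<Longrightarrow>
    (\<lambda>h. \<Sum>i\<in>I. f i (h::'a::chilbert)) \<in> cstar_gen G"
proof (induction I rule: finite_induct)
  case empty thus ?case using cstar_gen_zero[OF assms] by simp
next
  case (insert j I)
  hence "opadd (f j) (\<lambda>h. \<Sum>i\<in>I. f i h) \<in> cstar_gen G" by (intro cstar_gen_opadd) auto
  thus ?case using insert by (simp add: opadd_def)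
qed

definition matform :: "nat \<Rightarrow> (nat \<Rightarrow> nat \<Rightarrow> ('a::chilbert \<Rightarrow> 'a)) \<Rightarrow> (nat \<Rightarrow> 'a) \<Rightarrow> complex" where
  "matform k X h = (\<Sum>i<k. \<Sum>j<k. hinner (h i) (X i j (h j)))"

lemma matpos_iff_matform: "matpos k X \<longleftrightarrow> (\<forall>h. Im (matform k X h) = 0 \<and> 0 \<le> Re (matform k X h))"
  unfolding matpos_def matform_def Let_def ..

lemma matpos_Ad:
  assumes "bop a" and "matpos k Y"
  shows "matpos k (\<lambda>p q. a \<circ> Y p q \<circ> adj a)"
proof -
  have "matform k (\<lambda>p q. a \<circ> Y p q \<circ> adj a) h = matform k Y (\<lambda>p. adj a (h p))" for h
    unfolding matform_def by (simp add: hinner_adj_left[OF \<open>bop a\<close>])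
  thus ?thesis using assms(2) unfolding matpos_iff_matform by simp
qed

lemma matpos_sum:
  assumes "\<And>i. i \<in> I \<Longrightarrow> matpos k (Y i)"
  shows "matpos k (\<lambda>p q h. \<Sum>i\<in>I. Y i p q (h::'a::chilbert))"
proof -
  have "matform k (\<lambda>p q h. \<Sum>i\<in>I. Y i p q h) h = (\<Sum>i\<in>I. matform k (Y i) h)" for h
    unfolding matform_def hinner_sum_right by (simp add: sum.swap[of _ I])
  thus ?thesis using assms unfolding matpos_iff_matform by (simp add: sum_nonneg)
qed

text \<open>\<open>gram2 B\<close> is the operator matrix \<open>[[1, B], [B*, B*B]] = (1 B)* (1 B)\<close>.\<close>

definition gram2 :: "('a::chilbert \<Rightarrow> 'a) \<Rightarrow> nat \<Rightarrow> nat \<Rightarrow> ('a \<Rightarrow> 'a)" where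
  "gram2 B p q = (if p = 0 \<and> q = 0 then id else if p = 0 then B else if q = 0 then adj B else adj B \<circ> B)"

lemma sum_lessThan_2: "(\<Sum>p<(2::nat). f p) = f 0 + f 1"
  by (simp add: numeral_2_eq_2)

lemma matform_gram2: "bop B \<Longrightarrow> matform 2 (gram2 B) v = hinner (v 0 + B (v 1)) (v 0 + B (v 1))"
  unfolding matform_def
  by (simp add: sum_lessThan_2 gram2_def hinner_adj_right hinner_add_left hinner_add_right)

lemma matpos_gram2: "bop B \<Longrightarrow> matpos 2 (gram2 B)"
  unfolding matpos_iff_matform by (simp add: matform_gram2 hinner_self_real hsqnorm_nonneg)

lemma matform_2_expand:
  fixes Z :: "nat \<Rightarrow> nat \<Rightarrow> ('a::chilbert \<Rightarrow> 'a)"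
  assumes "bop (Z 0 0)" and "bop (Z 1 0)"
  shows "matform 2 Z (\<lambda>p. if p = 0 then u + hscale t h else w)
   = (hinner u (Z 0 0 u) + hinner u (Z 0 1 w) + hinner w (Z 1 0 u) + hinner w (Z 1 1 w))
     + cnj t * (hinner h (Z 0 0 u) + hinner h (Z 0 1 w))
     + t * (hinner u (Z 0 0 h) + hinner w (Z 1 0 h))
     + cnj t * t * hinner h (Z 0 0 h)"
  using assms
  by (simp add: matform_def sum_lessThan_2 bop_add bop_hscale hinner_add_left hinner_add_right
      hinner_scale_left hinner_scale_right algebra_simps)

lemma quadratic_bounded_imp_linear_coeffs_zero:
  fixes A \<alpha> \<gamma> \<beta> :: complex and C :: real
  assumes real: "\<And>t. Im (A + cnj t * \<alpha> + t * \<gamma> + cnj t * t * \<beta>) = 0"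
    and nonneg: "\<And>t. 0 \<le> Re (A + cnj t * \<alpha> + t * \<gamma> + cnj t * t * \<beta>)"
    and bounded: "\<And>t. Re (A + cnj t * \<alpha> + t * \<gamma> + cnj t * t * \<beta>) \<le> (cmod t)^2 * C"
  shows "\<alpha> = 0 \<and> \<gamma> = 0"
proof -
  have "Im A = 0" "Im A + Im \<alpha> + Im \<gamma> + Im \<beta> = 0" "Im A - Im \<alpha> - Im \<gamma> + Im \<beta> = 0"
    "Im A - Re \<alpha> + Re \<gamma> + Im \<beta> = 0"
    using real[of 0] real[of 1] real[of "-1"] real[of \<i>] by simp_all
  hence \<gamma>: "\<gamma> = cnj \<alpha>" by (simp add: complex_eq_iff)
  have "0 \<le> 2 * Re (t * cnj \<alpha>) + (cmod t)^2 * (C - Re \<beta>)" for t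
  proof -
    have "Re (A + cnj (- t) * \<alpha> + (- t) * \<gamma> + cnj (- t) * (- t) * \<beta>)
        = Re A - 2 * Re (t * cnj \<alpha>) + (cmod t)^2 * Re \<beta>"
      unfolding \<gamma> by (simp add: cnj_mult_cmod)
    thus ?thesis using bounded[of "- t"] nonneg[of 0] by (simp add: algebra_simps)
  qed
  hence "cnj \<alpha> = 0" by (rule nonneg_quadratic_imp_linear_coeff_zero)
  thus ?thesis using \<gamma> by simp
qed

lemma matform_le_of_below_gram2:
  assumes B: "bop B" and below: "matpos 2 (\<lambda>p q h. gram2 B p q h - Z p q h)"
  shows "Re (matform 2 Z v) \<le> hsqnorm (v 0 + B (v 1))"
proof -
  have "matform 2 (\<lambda>p q h. gram2 B p q h - Z p q h) v = matform 2 (gram2 B) v - matform 2 Z v"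
    unfolding matform_def by (simp add: hinner_diff_right sum_subtractf)
  moreover have "0 \<le> Re (matform 2 (\<lambda>p q h. gram2 B p q h - Z p q h) v)"
    using below unfolding matpos_iff_matform by blast
  ultimately show ?thesis unfolding matform_gram2[OF B] hinner_self_real by simp
qed

text \<open>On the vectors \<open>(B k + t h, -k)\<close> the form of \<open>gram2 B\<close> is \<open>|t|\<^sup>2 \<parallel>h\<parallel>\<^sup>2\<close>, so the form of any
positive matrix below it has no terms linear in \<open>t\<close>.\<close>

lemma matpos_below_gram2_cross_terms:
  fixes Z :: "nat \<Rightarrow> nat \<Rightarrow> ('a::chilbert \<Rightarrow> 'a)"
  assumes Z: "matpos 2 Z" "bop (Z 0 0)" "bop (Z 1 0)" and B: "bop B"
    and below: "matpos 2 (\<lambda>p q h. gram2 B p q h - Z p q h)"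
  shows "hinner h (Z 0 0 (B k)) + hinner h (Z 0 1 (- k)) = 0 \<and>
    hinner (B k) (Z 0 0 h) + hinner (- k) (Z 1 0 h) = 0"
proof -
  define v where "v t = (\<lambda>p::nat. if p = 0 then B k + hscale t h else - k)" for t
  define A where "A = hinner (B k) (Z 0 0 (B k)) + hinner (B k) (Z 0 1 (- k))
    + hinner (- k) (Z 1 0 (B k)) + hinner (- k) (Z 1 1 (- k))"
  have expand: "matform 2 Z (v t) = A + cnj t * (hinner h (Z 0 0 (B k)) + hinner h (Z 0 1 (- k)))
    + t * (hinner (B k) (Z 0 0 h) + hinner (- k) (Z 1 0 h)) + cnj t * t * hinner h (Z 0 0 h)" for t
    unfolding v_def A_def by (rule matform_2_expand[of Z, OF Z(2,3)])
  show ?thesis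
  proof (rule quadratic_bounded_imp_linear_coeffs_zero[where A = A and \<beta> = "hinner h (Z 0 0 h)"
        and C = "hsqnorm h"], unfold expand[symmetric])
    fix t
    show "Im (matform 2 Z (v t)) = 0" "0 \<le> Re (matform 2 Z (v t))"
      using Z(1) unfolding matpos_iff_matform by auto
    have "v t 0 + B (v t 1) = hscale t h" unfolding v_def by (simp add: bop_minus[OF B])
    thus "Re (matform 2 Z (v t)) \<le> (cmod t)^2 * hsqnorm h"
      using matform_le_of_below_gram2[OF B below, of "v t"] by (simp add: hsqnorm_hscale)
  qed
qed

text \<open>This is how a completely positive map below a *-homomorphism inherits its multiplicativity.\<close>

lemma matpos_below_gram2_factors:
  fixes Z :: "nat \<Rightarrow> nat \<Rightarrow> ('a::chilbert \<Rightarrow> 'a)"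
  assumes Z: "matpos 2 Z" "bop (Z 0 0)" "bop (Z 0 1)" "bop (Z 1 0)" and B: "bop B"
    and below: "matpos 2 (\<lambda>p q h. gram2 B p q h - Z p q h)"
  shows "Z 0 1 = Z 0 0 \<circ> B" and "Z 1 0 = adj B \<circ> Z 0 0"
proof -
  note cross = matpos_below_gram2_cross_terms[OF Z(1,2,4) B below]
  show "Z 0 1 = Z 0 0 \<circ> B"
  proof
    fix k
    have "Z 0 1 (- k) = - Z 0 0 (B k)"
    proof (rule hinner_right_ext)
      fix h
      show "hinner h (Z 0 1 (- k)) = hinner h (- Z 0 0 (B k))"
        using conjunct1[OF cross[of h k]] by (simp add: hinner_minus_right add_eq_0_iff2 add.commute)
    qed
    thus "Z 0 1 k = (Z 0 0 \<circ> B) k"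
      using bop_minus[OF Z(3), of k] by (metis neg_equal_iff_equal comp_apply)
  qed
  show "Z 1 0 = adj B \<circ> Z 0 0"
  proof
    fix h
    show "Z 1 0 h = (adj B \<circ> Z 0 0) h"
      using cross[of h] by (intro hinner_right_ext) (simp add: hinner_minus_left hinner_adj_right[OF B])
  qed
qed

lemma CP_Ad:
  assumes v: "bop v" and closed: "\<And>x. x \<in> A \<Longrightarrow> Ad v x \<in> A"
  shows "CP A (Ad v)"
  unfolding CP_def linear_on_def
proof (intro conjI ballI allI impI subsetI)
  show "Ad v (opadd x y) = opadd (Ad v x) (Ad v y)" for x y
    unfolding Ad_def opadd_def by (simp add: fun_eq_iff bop_add[OF v])
  show "Ad v (opscale c x) = opscale c (Ad v x)" for c x
    unfolding Ad_def opscale_def by (simp add: fun_eq_iff bop_hscale[OF v])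
  show "y \<in> A" if "y \<in> Ad v ` A" for y using that closed by blast
  show "matpos k (\<lambda>i j. Ad v (X i j))" if "(\<forall>i j. X i j \<in> A) \<and> matpos k X" for k X
    using matpos_Ad[OF v] that unfolding Ad_def by blast
qed

lemma CP_comp: "CP A \<Phi> \<Longrightarrow> CP A \<Psi> \<Longrightarrow> CP A (\<Phi> \<circ> \<Psi>)"
  unfolding CP_def linear_on_def by (simp add: image_subset_iff)

lemma Ad_opscale_id:
  "bop y \<Longrightarrow> Ad (opscale s id) y = opscale (s * cnj s) (y::'a::chilbert \<Rightarrow> 'a)"
proof -
  have "adj (opscale s id) = opscale (cnj s) (id::'a \<Rightarrow> 'a)"
    by (simp add: adj_opscale bop_id adj_id)
  thus "bop y \<Longrightarrow> ?thesis" by (simp add: Ad_def opscale_def fun_eq_iff bop_hscale hscale_assoc)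
qed

lemma opscale_id_comp: "opscale c id \<circ> opscale d id = opscale (c * d) (id::'a::chilbert \<Rightarrow> 'a)"
  by (simp add: opscale_def fun_eq_iff hscale_assoc)

lemma gram2_mem:
  assumes "id \<in> A" "b \<in> A" "\<forall>x\<in>A. adj x \<in> A" "\<forall>x\<in>A. \<forall>y\<in>A. x \<circ> y \<in> A"
  shows "gram2 b p q \<in> A"
  using assms unfolding gram2_def by auto

lemma star_hom_gram2:
  assumes "\<Phi> id = id" "\<Phi> (adj b) = adj (\<Phi> b)" "\<Phi> (adj b \<circ> b) = \<Phi> (adj b) \<circ> \<Phi> b"
  shows "\<Phi> (gram2 b p q) = gram2 (\<Phi> b) p q"
  using assms unfolding gram2_def by auto

text \<open>The matrix \<open>\<theta>\<^sub>i(gram2 b)\<close> lies below \<open>\<Phi>(gram2 b) = gram2 (\<Phi> b)\<close>, the difference being the other summands.\<close>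

lemma CP_summand_of_star_hom_factors:
  fixes \<Phi> :: "('a::chilbert \<Rightarrow> 'a) \<Rightarrow> ('a \<Rightarrow> 'a)" and m :: nat
  assumes A: "A \<subseteq> BH" "id \<in> A" "\<forall>x\<in>A. adj x \<in> A" "\<forall>x\<in>A. \<forall>y\<in>A. x \<circ> y \<in> A"
    and hom: "\<Phi> id = id" "\<forall>x\<in>A. \<Phi> (adj x) = adj (\<Phi> x)" "\<forall>x\<in>A. \<forall>y\<in>A. \<Phi> (x \<circ> y) = \<Phi> x \<circ> \<Phi> y"
      "\<forall>x\<in>A. bop (\<Phi> x)"
    and CP: "\<And>j. j < m \<Longrightarrow> CP A (\<theta> j)"
    and sum: "\<And>x h. x \<in> A \<Longrightarrow> (\<Sum>j<m. \<theta> j x h) = \<Phi> x h"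
    and "i < m" "b \<in> A"
  shows "\<theta> i b = \<theta> i id \<circ> \<Phi> b" and "\<theta> i (adj b) = adj (\<Phi> b) \<circ> \<theta> i id"
proof -
  have gram_mem: "gram2 b p q \<in> A" for p q using gram2_mem A(2-4) \<open>b \<in> A\<close> by blast
  have \<theta>_mem: "\<theta> j x \<in> A" if "j < m" "x \<in> A" for j x using CP[OF that(1)] that(2) unfolding CP_def by blast
  have bop_\<theta>: "bop (\<theta> i x)" if "x \<in> A" for x using \<theta>_mem[OF \<open>i < m\<close> that] A(1) by (auto simp: BH_def)
  have matpos_\<theta>: "matpos 2 (\<lambda>p q. \<theta> j (gram2 b p q))" if "j < m" for j
    using CP[OF that] gram_mem matpos_gram2[of b] A(1) \<open>b \<in> A\<close> unfolding CP_def by (auto simp: BH_def)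
  have "gram2 (\<Phi> b) p q h - \<theta> i (gram2 b p q) h = (\<Sum>j\<in>{..<m} - {i}. \<theta> j (gram2 b p q) h)" for p q h
  proof -
    have "gram2 (\<Phi> b) p q h = (\<Sum>j<m. \<theta> j (gram2 b p q) h)"
      using star_hom_gram2[of \<Phi> b] hom A(3) \<open>b \<in> A\<close> sum[OF gram_mem] by simp
    thus ?thesis using \<open>i < m\<close> by (subst (asm) sum.remove[of _ i]) auto
  qed
  hence "matpos 2 (\<lambda>p q h. gram2 (\<Phi> b) p q h - \<theta> i (gram2 b p q) h)"
    using matpos_sum[of "{..<m} - {i}" 2 "\<lambda>j p q. \<theta> j (gram2 b p q)"] matpos_\<theta> by simp
  moreover have "bop (\<theta> i (gram2 b p q))" for p q using bop_\<theta> gram_mem by blast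
  moreover have "bop (\<Phi> b)" using hom(4) \<open>b \<in> A\<close> by blast
  ultimately have "\<theta> i (gram2 b 0 1) = \<theta> i (gram2 b 0 0) \<circ> \<Phi> b"
    "\<theta> i (gram2 b 1 0) = adj (\<Phi> b) \<circ> \<theta> i (gram2 b 0 0)"
    using matpos_below_gram2_factors[of "\<lambda>p q. \<theta> i (gram2 b p q)", OF matpos_\<theta>[OF \<open>i < m\<close>]]
    by blast+
  thus "\<theta> i b = \<theta> i id \<circ> \<Phi> b" and "\<theta> i (adj b) = adj (\<Phi> b) \<circ> \<theta> i id"
    by (simp_all add: gram2_def)
qed

locale cuntz_family =
  fixes S :: "nat \<Rightarrow> ('a::chilbert \<Rightarrow> 'a)" and n :: nat
  assumes two_le_n: "2 \<le> n"
    and nontrivial: "\<exists>x::'a. x \<noteq> 0"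
    and isometries: "\<forall>i<n. isometry (S i)"
    and cuntz_relation: "\<forall>h. (\<Sum>i<n. S i (adj (S i) h)) = h"
begin

abbreviation cuntz_algebra :: "('a \<Rightarrow> 'a) set" where
  "cuntz_algebra \<equiv> cstar_gen (S ` {..<n})"

definition canonical_endo :: "('a \<Rightarrow> 'a) \<Rightarrow> 'a \<Rightarrow> 'a" where
  "canonical_endo x h = (\<Sum>i<n. S i (x (adj (S i) h)))"

definition canonical_left_inv :: "('a \<Rightarrow> 'a) \<Rightarrow> 'a \<Rightarrow> 'a" where
  "canonical_left_inv x h = hscale (1 / of_nat n) (\<Sum>i<n. adj (S i) (x (S i h)))"

definition proj :: "nat \<Rightarrow> 'a \<Rightarrow> 'a" where
  "proj i = S i \<circ> adj (S i)"

lemma bop_S: "i < n \<Longrightarrow> bop (S i)"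
  using isometries by (simp add: isometry_def)

lemma bop_adj_S: "i < n \<Longrightarrow> bop (adj (S i))"
  using bop_S bop_adj by blast

lemma adj_S_S_self: "i < n \<Longrightarrow> adj (S i) (S i h) = h"
  using isometries by (simp add: isometry_def fun_eq_iff)

lemma S_nonzero: "i < n \<Longrightarrow> x \<noteq> 0 \<Longrightarrow> S i x \<noteq> 0"
  by (metis adj_S_S_self bop_adj_S bop_zero)

text \<open>Orthogonality of the ranges: \<open>\<parallel>h\<parallel>\<^sup>2 = \<parallel>S\<^sub>j h\<parallel>\<^sup>2 = \<Sum>\<^sub>k \<parallel>S\<^sub>k* S\<^sub>j h\<parallel>\<^sup>2\<close>, and the
\<open>k = j\<close> term alone already accounts for \<open>\<parallel>h\<parallel>\<^sup>2\<close>.\<close>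

lemma adj_S_S:
  assumes "i < n" "j < n"
  shows "adj (S i) (S j h) = (if i = j then h else 0)"
proof (cases "i = j")
  case True thus ?thesis using adj_S_S_self assms by simp
next
  case False
  define v where "v k = adj (S k) (S j h)" for k
  have "S j h = (\<Sum>k<n. S k (v k))" unfolding v_def using cuntz_relation by simp
  hence "hinner (S j h) (S j h) = (\<Sum>k<n. hinner (S j h) (S k (v k)))"
    by (metis hinner_sum_right)
  also have "\<dots> = (\<Sum>k<n. hinner (v k) (v k))"
    by (rule sum.cong) (auto simp: hinner_adj_left[OF bop_S] v_def)
  finally have "hsqnorm h = (\<Sum>k<n. hsqnorm (v k))"
    using hinner_adj_right[OF bop_S[OF assms(2)]] adj_S_S_self[OF assms(2)]
    unfolding hsqnorm_def by (metis Re_sum)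
  also have "\<dots> = hsqnorm h + (\<Sum>k\<in>{..<n} - {j}. hsqnorm (v k))"
    using assms(2) adj_S_S_self[OF assms(2)] by (simp add: sum.remove v_def)
  finally have "(\<Sum>k\<in>{..<n} - {j}. hsqnorm (v k)) = 0" by simp
  hence "hsqnorm (v i) = 0" using assms False by (simp add: sum_nonneg_eq_0_iff hsqnorm_nonneg)
  thus ?thesis unfolding v_def using False by (simp add: hsqnorm_eq_0_iff)
qed

lemma adj_S_sum: "j < n \<Longrightarrow> adj (S j) (\<Sum>i<n. S i (g i)) = g j"
proof -
  assume "j < n"
  have "adj (S j) (\<Sum>i<n. S i (g i)) = (\<Sum>i<n. adj (S j) (S i (g i)))"
    by (rule bop_sum[OF bop_adj_S[OF \<open>j < n\<close>]])
  also have "\<dots> = (\<Sum>i<n. if j = i then g i else 0)"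
    using \<open>j < n\<close> by (intro sum.cong) (auto simp: adj_S_S)
  finally show ?thesis using \<open>j < n\<close> by simp
qed

lemma generators_nonempty: "S ` {..<n} \<noteq> {}"
  using two_le_n by (simp add: lessThan_empty_iff)

lemma bop_of_mem: "x \<in> cuntz_algebra \<Longrightarrow> bop x"
proof -
  assume "x \<in> cuntz_algebra"
  moreover have "S ` {..<n} \<subseteq> BH" using bop_S by (auto simp: BH_def)
  ultimately have "x \<in> BH" using cstar_gen_subset_BH by blast
  thus ?thesis by (simp add: BH_def)
qed

lemma S_mem: "i < n \<Longrightarrow> S i \<in> cuntz_algebra"
  using generators_subset_cstar_gen[of "S ` {..<n}"] by auto

lemma adj_S_mem: "i < n \<Longrightarrow> adj (S i) \<in> cuntz_algebra"
  by (rule cstar_gen_adj[OF S_mem])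

lemma proj_mem: "i < n \<Longrightarrow> proj i \<in> cuntz_algebra"
  unfolding proj_def by (rule cstar_gen_comp[OF S_mem adj_S_mem])

lemma bop_proj: "i < n \<Longrightarrow> bop (proj i)"
  using bop_of_mem proj_mem by blast

lemma adj_proj: "i < n \<Longrightarrow> adj (proj i) = proj i"
  unfolding proj_def by (simp add: adj_comp bop_S bop_adj_S adj_adj)

lemma proj_proj: "i < n \<Longrightarrow> proj i (proj i h) = proj i h"
  unfolding proj_def by (simp add: adj_S_S_self)

lemma proj_idem: "i < n \<Longrightarrow> proj i \<circ> proj i = proj i"
  by (simp add: fun_eq_iff proj_proj)

lemma sum_proj: "(\<Sum>i<n. proj i h) = h"
  using cuntz_relation by (simp add: proj_def)

lemma id_mem: "id \<in> cuntz_algebra"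
proof -
  have "(\<lambda>h. \<Sum>i\<in>{..<n}. proj i h) \<in> cuntz_algebra"
    using proj_mem by (intro cstar_gen_sum[OF generators_nonempty]) auto
  moreover have "(\<lambda>h. \<Sum>i\<in>{..<n}. proj i h) = id" by (simp add: fun_eq_iff sum_proj)
  ultimately show ?thesis by simp
qed

lemma opscale_id_cancel: "opscale c (id::'a \<Rightarrow> 'a) = opscale d id \<Longrightarrow> c = d"
proof -
  assume eq: "opscale c id = opscale d (id::'a \<Rightarrow> 'a)"
  obtain x :: 'a where "x \<noteq> 0" using nontrivial by blast
  have "hscale c x = hscale d x" using fun_cong[OF eq, of x] by (simp add: opscale_def)
  thus "c = d" using \<open>x \<noteq> 0\<close> by (rule hscale_cancel_left)
qed

lemma proj_not_scalar: "proj 0 \<noteq> opscale c id"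
proof
  assume proj0: "proj 0 = opscale c id"
  obtain x :: 'a where "x \<noteq> 0" using nontrivial by blast
  have "0 < n" "1 < n" using two_le_n by auto
  have "hscale c (S 0 x) = hscale 1 (S 0 x)"
    using fun_cong[OF proj0, of "S 0 x"] adj_S_S_self[OF \<open>0 < n\<close>]
    by (simp add: proj_def opscale_def hscale_one)
  hence "c = 1" using S_nonzero[OF \<open>0 < n\<close> \<open>x \<noteq> 0\<close>] by (rule hscale_cancel_left)
  hence "proj 0 (S 1 x) = S 1 x" using proj0 by (simp add: opscale_def hscale_one)
  moreover have "proj 0 (S 1 x) = 0"
    using adj_S_S[OF \<open>0 < n\<close> \<open>1 < n\<close>] bop_zero[OF bop_S[OF \<open>0 < n\<close>]] by (simp add: proj_def)
  ultimately show False using S_nonzero[OF \<open>1 < n\<close> \<open>x \<noteq> 0\<close>] by simp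
qed

lemma canonical_endo_eq_sum: "canonical_endo x = (\<lambda>h. \<Sum>i\<in>{..<n}. (S i \<circ> x \<circ> adj (S i)) h)"
  by (simp add: canonical_endo_def fun_eq_iff)

lemma canonical_endo_comp: "canonical_endo (x \<circ> y) = canonical_endo x \<circ> canonical_endo y"
  by (simp add: canonical_endo_def fun_eq_iff adj_S_sum)

lemma canonical_endo_id: "canonical_endo id = id"
  using cuntz_relation by (simp add: canonical_endo_def fun_eq_iff)

lemma bop_canonical_endo: "bop x \<Longrightarrow> bop (canonical_endo x)"
  unfolding canonical_endo_eq_sum
  by (intro bop_sum_map) (auto intro!: bop_comp bop_S bop_adj_S simp del: o_apply)

lemma canonical_endo_mem: "x \<in> cuntz_algebra \<Longrightarrow> canonical_endo x \<in> cuntz_algebra"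
  unfolding canonical_endo_eq_sum
  by (intro cstar_gen_sum[OF generators_nonempty])
     (auto intro!: cstar_gen_comp S_mem adj_S_mem simp del: o_apply)

lemma adj_canonical_endo: "bop x \<Longrightarrow> adj (canonical_endo x) = canonical_endo (adj x)"
proof -
  assume "bop x"
  hence "adj (canonical_endo x) = (\<lambda>h. \<Sum>i\<in>{..<n}. adj (S i \<circ> x \<circ> adj (S i)) h)"
    unfolding canonical_endo_eq_sum
    by (intro adj_sum) (auto intro!: bop_comp bop_S bop_adj_S simp del: o_apply)
  also have "\<dots> = canonical_endo (adj x)"
    using \<open>bop x\<close> unfolding canonical_endo_def
    by (intro ext sum.cong) (auto simp: adj_comp bop_comp adj_adj bop_S bop_adj_S)
  finally show ?thesis .
qed

lemma proj_comm_canonical_endo: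
  assumes "bop x" "j < n"
  shows "proj j \<circ> canonical_endo x = canonical_endo x \<circ> proj j"
proof
  fix h
  have "(\<Sum>i<n. S i (x (adj (S i) (S j (adj (S j) h))))) = (\<Sum>i<n. if i = j then S j (x (adj (S j) h)) else 0)"
    using assms by (intro sum.cong) (auto simp: adj_S_S bop_zero bop_S)
  thus "(proj j \<circ> canonical_endo x) h = (canonical_endo x \<circ> proj j) h"
    using assms(2) by (simp add: proj_def canonical_endo_def adj_S_sum)
qed

lemma CP_canonical_endo: "CP cuntz_algebra canonical_endo"
  unfolding CP_def linear_on_def
proof (intro conjI ballI allI impI subsetI)
  show "canonical_endo (opadd x y) = opadd (canonical_endo x) (canonical_endo y)" for x y
    by (simp add: canonical_endo_def opadd_def fun_eq_iff bop_add[OF bop_S] sum.distrib)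
  show "canonical_endo (opscale c x) = opscale c (canonical_endo x)" for c x
    by (simp add: canonical_endo_def opscale_def fun_eq_iff bop_hscale[OF bop_S] hscale_sum_right)
  show "y \<in> cuntz_algebra" if "y \<in> canonical_endo ` cuntz_algebra" for y
    using that canonical_endo_mem by blast
  show "matpos k (\<lambda>p q. canonical_endo (X p q))" if "(\<forall>p q. X p q \<in> cuntz_algebra) \<and> matpos k X" for k X
    unfolding canonical_endo_eq_sum
    using that matpos_sum[of "{..<n}" k "\<lambda>i p q. S i \<circ> X p q \<circ> adj (S i)"] matpos_Ad[OF bop_S] by simp
qed

theorem commutant_canonical_endo_not_scalar: "commutant (canonical_endo ` cuntz_algebra) \<noteq> scalar_ops"
proof
  assume "commutant (canonical_endo ` cuntz_algebra) = scalar_ops"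
  moreover have "proj 0 \<in> commutant (canonical_endo ` cuntz_algebra)"
    using two_le_n bop_proj proj_comm_canonical_endo bop_of_mem by (auto simp: commutant_def BH_def)
  ultimately show False using proj_not_scalar by (auto simp: scalar_ops_def)
qed

lemma CP_summand_of_canonical_endo_factors:
  fixes m :: nat
  assumes CP: "\<forall>j<m. CP cuntz_algebra (\<theta> j)"
    and sum: "\<forall>x\<in>cuntz_algebra. \<forall>h. (\<Sum>j<m. \<theta> j x h) = canonical_endo x h"
    and "i < m" "x \<in> cuntz_algebra"
  shows "\<theta> i x = \<theta> i id \<circ> canonical_endo x" and "\<theta> i (adj x) = adj (canonical_endo x) \<circ> \<theta> i id"
proof -
  have "cuntz_algebra \<subseteq> BH" "\<forall>x\<in>cuntz_algebra. adj x \<in> cuntz_algebra"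
    "\<forall>x\<in>cuntz_algebra. \<forall>y\<in>cuntz_algebra. x \<circ> y \<in> cuntz_algebra"
    "\<forall>x\<in>cuntz_algebra. canonical_endo (adj x) = adj (canonical_endo x)"
    "\<forall>x\<in>cuntz_algebra. \<forall>y\<in>cuntz_algebra. canonical_endo (x \<circ> y) = canonical_endo x \<circ> canonical_endo y"
    "\<forall>x\<in>cuntz_algebra. bop (canonical_endo x)"
    using bop_of_mem by (auto simp: BH_def cstar_gen_adj cstar_gen_comp adj_canonical_endo
        canonical_endo_comp bop_canonical_endo)
  from CP_summand_of_star_hom_factors[OF this(1) id_mem this(2,3) canonical_endo_id this(4-6)
      CP[rule_format] sum[rule_format] assms(3,4)]
  show "\<theta> i x = \<theta> i id \<circ> canonical_endo x" and "\<theta> i (adj x) = adj (canonical_endo x) \<circ> \<theta> i id"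
    by blast+
qed

theorem operational_extreme_canonical_endo: "operational_extreme cuntz_algebra canonical_endo"
  unfolding operational_extreme_def
proof (intro conjI allI impI)
  show "CP cuntz_algebra canonical_endo" by (rule CP_canonical_endo)
  fix m a \<Psi>
  assume "admissible_decomp cuntz_algebra canonical_endo m a \<Psi>"
  hence a: "\<And>i. i < m \<Longrightarrow> a i \<in> cuntz_algebra" and CP: "\<And>i. i < m \<Longrightarrow> CP cuntz_algebra (\<Psi> i)"
    and decomp: "\<And>x h. x \<in> cuntz_algebra \<Longrightarrow> canonical_endo x h = (\<Sum>i<m. Ad (a i) (\<Psi> i x) h)"
    unfolding admissible_decomp_def by auto
  define \<theta> where "\<theta> i = Ad (a i) \<circ> \<Psi> i" for i
  have CP_\<theta>: "\<forall>i<m. CP cuntz_algebra (\<theta> i)"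
    unfolding \<theta>_def using a bop_of_mem
    by (auto intro!: CP_comp CP CP_Ad simp: Ad_def intro!: cstar_gen_comp cstar_gen_adj)
  have "\<forall>x\<in>cuntz_algebra. \<forall>h. (\<Sum>i<m. \<theta> i x h) = canonical_endo x h"
    using decomp by (simp add: \<theta>_def)
  note factor = CP_summand_of_canonical_endo_factors[OF CP_\<theta> this]
  show "\<exists>z. \<forall>i<m. z i \<in> commutant (canonical_endo ` cuntz_algebra) \<and>
      (\<forall>x\<in>cuntz_algebra. Ad (a i) (\<Psi> i x) = z i \<circ> canonical_endo x)"
  proof (intro exI allI impI conjI ballI)
    fix i assume "i < m"
    show "Ad (a i) (\<Psi> i x) = \<theta> i id \<circ> canonical_endo x" if "x \<in> cuntz_algebra" for x
      using factor(1)[OF \<open>i < m\<close> that] by (simp add: \<theta>_def)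
    have "\<theta> i id \<in> cuntz_algebra" using CP_\<theta> \<open>i < m\<close> id_mem unfolding CP_def by blast
    hence "\<theta> i id \<in> BH" using bop_of_mem by (simp add: BH_def)
    moreover have "\<theta> i id \<circ> canonical_endo x = canonical_endo x \<circ> \<theta> i id" if "x \<in> cuntz_algebra" for x
    proof -
      have "adj (canonical_endo (adj x)) = canonical_endo x"
        using bop_of_mem[OF that] by (simp add: adj_canonical_endo bop_adj adj_adj)
      thus ?thesis
        using factor(1)[OF \<open>i < m\<close> that] factor(2)[OF \<open>i < m\<close> cstar_gen_adj[OF that]]
          adj_adj[OF bop_of_mem[OF that]] by (simp add: comp_def)
    qed
    ultimately show "\<theta> i id \<in> commutant (canonical_endo ` cuntz_algebra)"
      unfolding commutant_def by auto
  qed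
qed

lemma Ad_proj_canonical_endo:
  assumes "i < n" "bop x"
  shows "Ad (proj i) (canonical_endo x) = proj i \<circ> canonical_endo x"
proof -
  have "proj i \<circ> canonical_endo x \<circ> proj i = proj i \<circ> (proj i \<circ> canonical_endo x)"
    by (simp only: comp_assoc flip: proj_comm_canonical_endo[OF assms(2,1)])
  also have "\<dots> = proj i \<circ> canonical_endo x"
    using proj_idem[OF assms(1)] by (simp flip: comp_assoc)
  finally show ?thesis using assms(1) by (simp add: Ad_def adj_proj)
qed

theorem not_numerical_operational_extreme_canonical_endo:
  "\<not> numerical_operational_extreme cuntz_algebra canonical_endo"
proof
  assume "numerical_operational_extreme cuntz_algebra canonical_endo"
  moreover have "admissible_decomp cuntz_algebra canonical_endo n proj (\<lambda>_. canonical_endo)"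
    unfolding admissible_decomp_def
  proof (intro conjI allI ballI impI)
    fix i assume "i < n"
    show "CP cuntz_algebra canonical_endo" by (rule CP_canonical_endo)
    show "proj i \<in> cuntz_algebra" by (rule proj_mem[OF \<open>i < n\<close>])
    obtain x :: 'a where "x \<noteq> 0" using nontrivial by blast
    have "proj i (S i x) = S i x" using \<open>i < n\<close> by (simp add: proj_def adj_S_S_self)
    thus "proj i \<noteq> (\<lambda>_. 0)" using S_nonzero[OF \<open>i < n\<close> \<open>x \<noteq> 0\<close>] by auto
  next
    show "(\<Sum>i<n. proj i (adj (proj i) h)) = h" for h
      using sum_proj[of h] by (simp add: adj_proj proj_proj)
  next
    fix x h assume "x \<in> cuntz_algebra"
    thus "canonical_endo x h = (\<Sum>i<n. Ad (proj i) (canonical_endo x) h)"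
      using sum_proj[of "canonical_endo x h"] by (simp add: Ad_proj_canonical_endo bop_of_mem)
  qed
  ultimately obtain t :: real where
    "Ad (proj 0) (canonical_endo id) = opscale (of_real t) (canonical_endo id)"
    using two_le_n id_mem unfolding numerical_operational_extreme_def by fastforce
  hence "proj 0 = opscale (of_real t) id"
    using two_le_n by (simp add: canonical_endo_id Ad_def adj_proj proj_idem)
  thus False using proj_not_scalar by blast
qed

lemma canonical_left_inv_id: "canonical_left_inv id = id"
proof
  fix h
  have "(\<Sum>i<n. adj (S i) (S i h)) = hscale (of_nat n) h"
    by (simp add: adj_S_S_self sum_const_hscale)
  thus "canonical_left_inv id h = id h"
    using two_le_n by (simp add: canonical_left_inv_def hscale_assoc hscale_one)
qed

lemma canonical_left_inv_proj0: "canonical_left_inv (proj 0) = opscale (1 / of_nat n) id"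
proof
  fix h
  have "0 < n" using two_le_n by simp
  have "adj (S i) (proj 0 (S i h)) = (if i = 0 then h else 0)" if "i < n" for i
    using adj_S_S[OF \<open>0 < n\<close> that] adj_S_S_self bop_zero[OF bop_adj_S[OF that]]
      bop_zero[OF bop_S[OF \<open>0 < n\<close>]]
    by (simp add: proj_def \<open>0 < n\<close>)
  hence "(\<Sum>i<n. adj (S i) (proj 0 (S i h))) = h" by (simp add: \<open>0 < n\<close>)
  thus "canonical_left_inv (proj 0) h = opscale (1 / of_nat n) id h"
    by (simp add: canonical_left_inv_def opscale_def)
qed

lemma inverse_n_not_idem: "(1 / of_nat n :: complex) * (1 / of_nat n) \<noteq> 1 / of_nat n"
  using two_le_n by (simp add: field_simps)

theorem not_jordan_hom_canonical_left_inv: "\<not> jordan_hom_on cuntz_algebra canonical_left_inv"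
proof
  assume "jordan_hom_on cuntz_algebra canonical_left_inv"
  moreover have "proj 0 \<in> cuntz_algebra" "adj (proj 0) = proj 0"
    using two_le_n proj_mem adj_proj by auto
  ultimately have "canonical_left_inv (proj 0 \<circ> proj 0) = canonical_left_inv (proj 0) \<circ> canonical_left_inv (proj 0)"
    unfolding jordan_hom_on_def by blast
  hence "opscale (1 / of_nat n) id = opscale ((1 / of_nat n) * (1 / of_nat n)) (id::'a \<Rightarrow> 'a)"
    using two_le_n by (simp add: proj_idem canonical_left_inv_proj0 opscale_id_comp)
  thus False using opscale_id_cancel inverse_n_not_idem by metis
qed

lemma Ad_adj_S: "i < n \<Longrightarrow> Ad (adj (S i)) x = adj (S i) \<circ> x \<circ> S i"
  using adj_adj[OF bop_S] by (simp add: Ad_def)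

lemma Ad_inverse_sqrt_n:
  "bop y \<Longrightarrow> Ad (opscale (of_real (1 / sqrt (real n))) id) y = opscale (1 / of_nat n) y"
  using two_le_n by (simp add: Ad_opscale_id flip: of_real_mult)

lemma admissible_decomp_canonical_left_inv:
  "admissible_decomp cuntz_algebra canonical_left_inv n
     (\<lambda>_. opscale (of_real (1 / sqrt (real n))) id) (\<lambda>i. Ad (adj (S i)))"
  unfolding admissible_decomp_def
proof (intro conjI allI ballI impI)
  fix i assume "i < n"
  show "CP cuntz_algebra (Ad (adj (S i)))"
    using \<open>i < n\<close> Ad_adj_S by (intro CP_Ad bop_adj_S) (auto intro!: cstar_gen_comp adj_S_mem S_mem)
  show "opscale (of_real (1 / sqrt (real n))) id \<in> cuntz_algebra"
    by (rule cstar_gen_opscale[OF id_mem])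
  show "opscale (of_real (1 / sqrt (real n))) id \<noteq> (\<lambda>_. 0::'a)"
    using opscale_id_cancel[of "of_real (1 / sqrt (real n))" 0] two_le_n
    by (auto simp: opscale_def fun_eq_iff)
next
  fix h :: 'a
  have "opscale (of_real (1 / sqrt (real n))) id (adj (opscale (of_real (1 / sqrt (real n))) id) y)
      = hscale (1 / of_nat n) y" for y :: 'a
    using fun_cong[OF Ad_inverse_sqrt_n[OF bop_id], of y] by (simp add: Ad_def opscale_def)
  hence "(\<Sum>i<n. opscale (of_real (1 / sqrt (real n))) id
      (adj (opscale (of_real (1 / sqrt (real n))) id) h)) = hscale (1 / of_nat n) (hscale (of_nat n) h)"
    by (simp add: hscale_sum_right flip: sum_const_hscale)
  thus "(\<Sum>i<n. opscale (of_real (1 / sqrt (real n))) id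
      (adj (opscale (of_real (1 / sqrt (real n))) id) h)) = h"
    using two_le_n by (simp add: hscale_assoc hscale_one)
next
  fix x h assume x: "x \<in> cuntz_algebra"
  have "Ad (opscale (of_real (1 / sqrt (real n))) id) (Ad (adj (S i)) x) h
      = hscale (1 / of_nat n) (adj (S i) (x (S i h)))" if "i < n" for i
    using Ad_inverse_sqrt_n[OF bop_comp[OF bop_comp[OF bop_adj_S[OF that] bop_of_mem[OF x]] bop_S[OF that]]]
    by (simp add: Ad_adj_S[OF that] opscale_def)
  thus "canonical_left_inv x h
      = (\<Sum>i<n. Ad (opscale (of_real (1 / sqrt (real n))) id) (Ad (adj (S i)) x) h)"
    by (simp add: canonical_left_inv_def hscale_sum_right)
qed

text \<open>In the decomposition above, operational extremality would force the operator multiplier \<open>z\<^sub>0\<close>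
to be \<open>1/n\<close> (test on \<open>1\<close>) and also \<open>1\<close> (test on \<open>S\<^sub>0 S\<^sub>0*\<close>, which \<open>\<Psi>\<^sub>n\<close> sends to \<open>1/n\<close>).\<close>

theorem not_operational_extreme_canonical_left_inv:
  "\<not> operational_extreme cuntz_algebra canonical_left_inv"
proof
  assume "operational_extreme cuntz_algebra canonical_left_inv"
  then obtain z where "\<forall>i<n. z i \<in> commutant (canonical_left_inv ` cuntz_algebra) \<and>
      (\<forall>x\<in>cuntz_algebra. Ad (opscale (of_real (1 / sqrt (real n))) id) (Ad (adj (S i)) x)
         = z i \<circ> canonical_left_inv x)"
    using admissible_decomp_canonical_left_inv unfolding operational_extreme_def by blast
  moreover have "0 < n" using two_le_n by simp
  ultimately have z: "\<And>x. x \<in> cuntz_algebra \<Longrightarrow>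
      Ad (opscale (of_real (1 / sqrt (real n))) id) (Ad (adj (S 0)) x) = z 0 \<circ> canonical_left_inv x"
    by blast
  have "Ad (opscale (of_real (1 / sqrt (real n))) id) (Ad (adj (S 0)) x) = opscale (1 / of_nat n) id"
    if "adj (S 0) \<circ> x \<circ> S 0 = id" for x
    using that Ad_inverse_sqrt_n[OF bop_id] by (simp add: Ad_adj_S[OF \<open>0 < n\<close>])
  moreover have "adj (S 0) \<circ> id \<circ> S 0 = id" "adj (S 0) \<circ> proj 0 \<circ> S 0 = id"
    using adj_S_S_self[OF \<open>0 < n\<close>] by (simp_all add: proj_def fun_eq_iff)
  ultimately have "z 0 = opscale (1 / of_nat n) id" "opscale (1 / of_nat n) id = z 0 \<circ> opscale (1 / of_nat n) id"
    using z[OF id_mem] z[OF proj_mem[OF \<open>0 < n\<close>]]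
    by (simp_all add: canonical_left_inv_id canonical_left_inv_proj0)
  hence "opscale (1 / of_nat n) id = opscale ((1 / of_nat n) * (1 / of_nat n)) (id::'a \<Rightarrow> 'a)"
    by (simp add: opscale_id_comp)
  thus False using opscale_id_cancel inverse_n_not_idem by metis
qed

end

theorem mainTheorem6:
  fixes S :: "nat \<Rightarrow> ('a::chilbert \<Rightarrow> 'a)" and n :: nat
  assumes "n \<ge> 2"
    and "infinite_dim TYPE('a)"
    and "\<forall>i<n. isometry (S i)"
    and "\<forall>h. (\<Sum>i<n. S i (adj (S i) h)) = h"
  defines "On \<equiv> cstar_gen (S ` {..<n})"
    and "Phi \<equiv> (\<lambda>x h. \<Sum>i<n. S i (x (adj (S i) h)))"
    and "Psi \<equiv> (\<lambda>x h. hscale (1 / of_nat n) (\<Sum>i<n. adj (S i) (x (S i h))))"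
  shows "commutant (Phi ` On) \<noteq> scalar_ops
     \<and> operational_extreme On Phi \<and> \<not> numerical_operational_extreme On Phi
     \<and> \<not> operational_extreme On Psi \<and> \<not> jordan_hom_on On Psi"
proof -
  have "\<exists>x::'a. x \<noteq> 0"
    using assms(2) unfolding infinite_dim_def by fastforce
  then interpret cuntz_family S n
    using assms(1,3,4) by unfold_locales
  have "Phi = canonical_endo" "Psi = canonical_left_inv"
    unfolding Phi_def Psi_def canonical_endo_def canonical_left_inv_def by (simp_all add: fun_eq_iff)
  thus ?thesis
    unfolding On_def
    using commutant_canonical_endo_not_scalar operational_extreme_canonical_endo
      not_numerical_operational_extreme_canonical_endo not_operational_extreme_canonical_left_inv
      not_jordan_hom_canonical_left_inv
    by simp
qed

end
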